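(* There is an absolute constant $C$ and a deterministic adaptive procedure with the following property. Let $G=(V,E)$ be a connected graph on $n\ge 2$ vertices with maximum degree $\Delta\ge 2$, $s\in V$, $\mathcal{T}$ the layering tree of $G$ with respect to $s$, and $\ell\ge \ell(\mathcal{T})$ an integer. Let $k\ge 0$ and $i=k+\ell+2$. Given $\ell$, the layers $L_0,L_1,\dots$, the graph $G_i$ and the tree $\mathcal{T}_k$, and access to the shortest-path distance oracle of $G$, the procedure computes $G_{i+1}$ using at most $C\cdot|L_i|\left(\Delta^{\ell+2}\log n+\Delta^{4\ell+8}\right)$ queries.
   Context: Shortest-path distance oracle: given $u,v\in V$ it returns $d_G(u,v)$; each call is one query, chosen adaptively. For a connected graph $G$ and root $s\in V(G)$, the BFS layers are $L_i=\{v: d_G(s,v)=i\}$ for $i\ge 0$, with $L_{\le k}=L_0\cup\dots\cup L_k$, $L_{\ge k}=\bigcup_{j\ge k}L_j$, $L_{-1}=\emptyset$. For each $i\ge 0$, let $S_i^1,\dots,S_i^{s_i}$ be the connected components of $G\setminus L_{\le i-1}$ (i.e. of $G[L_{\ge i}]$), and let $P_i^j=S_i^j\cap L_i$; the nonempty sets $P_i^j$ are the parts at layer (depth) $i$, and the set $\mathcal{P}$ of all parts over all layers partitions $V(G)$. The layering tree $\mathcal{T}=(\mathcal{P},\mathcal{E})$ has the parts as vertices, with $(P,P')\in\mathcal{E}$ iff some $u\in P$, $u'\in P'$ are adjacent in $G$. Its length is $\ell(\mathcal{T})=\max_{P\in\mathcal{P}}\max_{u,v\in P} d_G(u,v)$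 (distances measured in $G$). $G_i=G[L_{\le i-1}]$ is the subgraph induced by the first $i$ layers, and $\mathcal{T}_k$ is the subtree of $\mathcal{T}$ induced by the parts at layers $0,1,\dots,k-1$. *)

theory Defs
  imports Complex_Main
begin

definition simple_graph :: "nat set \<Rightarrow> nat set set \<Rightarrow> bool" where
  "simple_graph V E \<longleftrightarrow> finite V \<and> E \<subseteq> {{u, v} | u v. u \<in> V \<and> v \<in> V \<and> u \<noteq> v}"

definition adj :: "nat set set \<Rightarrow> (nat \<times> nat) set" where
  "adj E = {(u, v). {u, v} \<in> E \<and> u \<noteq> v}"

definition connected_graph :: "nat set \<Rightarrow> nat set set \<Rightarrow> bool" where
  "connected_graph V E \<longleftrightarrow> (\<forall>u\<in>V. \<forall>v\<in>V. \<exists>m. (u, v) \<in> adj E ^^ m)"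

definition dist :: "nat set set \<Rightarrow> nat \<Rightarrow> nat \<Rightarrow> nat" where
  "dist E u v = (LEAST m. (u, v) \<in> adj E ^^ m)"

definition degree :: "nat set set \<Rightarrow> nat \<Rightarrow> nat" where
  "degree E u = card {v. {u, v} \<in> E \<and> u \<noteq> v}"

definition max_degree :: "nat set \<Rightarrow> nat set set \<Rightarrow> nat" where
  "max_degree V E = Max (degree E ` V)"

definition layer :: "nat set \<Rightarrow> nat set set \<Rightarrow> nat \<Rightarrow> nat \<Rightarrow> nat set" where
  "layer V E s i = {v \<in> V. dist E s v = i}"

definition layers_ge :: "nat set \<Rightarrow> nat set set \<Rightarrow> nat \<Rightarrow> nat \<Rightarrow> nat set" where
  "layers_ge V E s i = {v \<in> V. i \<le> dist E s v}"

text \<open>L_{\<le> i-1} = first i layers (empty for i = 0).\<close>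
definition layers_lt :: "nat set \<Rightarrow> nat set set \<Rightarrow> nat \<Rightarrow> nat \<Rightarrow> nat set" where
  "layers_lt V E s i = {v \<in> V. dist E s v < i}"

definition component_in :: "nat set set \<Rightarrow> nat set \<Rightarrow> nat \<Rightarrow> nat set" where
  "component_in E W x = {y \<in> W. (x, y) \<in> (adj E \<inter> (W \<times> W))\<^sup>*}"

definition parts_at :: "nat set \<Rightarrow> nat set set \<Rightarrow> nat \<Rightarrow> nat \<Rightarrow> nat set set" where
  "parts_at V E s i =
     {component_in E (layers_ge V E s i) x \<inter> layer V E s i | x. x \<in> layer V E s i}"

definition parts :: "nat set \<Rightarrow> nat set set \<Rightarrow> nat \<Rightarrow> nat set set" where
  "parts V E s = (\<Union>i. parts_at V E s i)"

definition part_edges :: "nat set set \<Rightarrow> nat set set \<Rightarrow> nat set set set" where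
  "part_edges E Ps = {{P, P'} | P P'. P \<in> Ps \<and> P' \<in> Ps \<and> P \<noteq> P' \<and>
                        (\<exists>u\<in>P. \<exists>u'\<in>P'. {u, u'} \<in> E)}"

definition tree_length :: "nat set \<Rightarrow> nat set set \<Rightarrow> nat \<Rightarrow> nat" where
  "tree_length V E s = Max {dist E u v | u v P. P \<in> parts V E s \<and> u \<in> P \<and> v \<in> P}"

text \<open>T_k: subtree induced by the parts at layers 0..k-1 (vertex set, edge set).\<close>
definition tree_prefix :: "nat set \<Rightarrow> nat set set \<Rightarrow> nat \<Rightarrow> nat \<Rightarrow> nat set set \<times> nat set set set" where
  "tree_prefix V E s k =
     (let Ps = (\<Union>j<k. parts_at V E s j) in (Ps, part_edges E Ps))"

text \<open>G_i = G[L_{\<le> i-1}] (vertex set, edge set).\<close>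
definition graph_prefix :: "nat set \<Rightarrow> nat set set \<Rightarrow> nat \<Rightarrow> nat \<Rightarrow> nat set \<times> nat set set" where
  "graph_prefix V E s i =
     (let W = layers_lt V E s i in (W, {e \<in> E. e \<subseteq> W}))"

text \<open>A deterministic adaptive procedure with oracle queries of type 'q answered by
values of type 'a and final output 'r: either return a result, or ask a query and
continue depending on the answer.\<close>
datatype ('q, 'a, 'r) qtree = Ret 'r | Ask 'q "'a \<Rightarrow> ('q, 'a, 'r) qtree"

primrec run_result :: "('q \<Rightarrow> 'a) \<Rightarrow> ('q, 'a, 'r) qtree \<Rightarrow> 'r" where
  "run_result orc (Ret r) = r"
| "run_result orc (Ask q f) = run_result orc (f (orc q))"

primrec run_queries :: "('q \<Rightarrow> 'a) \<Rightarrow> ('q, 'a, 'r) qtree \<Rightarrow> nat" where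
  "run_queries orc (Ret r) = 0"
| "run_queries orc (Ask q f) = Suc (run_queries orc (f (orc q)))"

text \<open>Input given to the procedure: l, k, the layer function i \<mapsto> L_i, the graph G_i
 and the tree T_k.\<close>
type_synonym proc_input =
  "nat \<times> nat \<times> (nat \<Rightarrow> nat set) \<times> (nat set \<times> nat set set) \<times> (nat set set \<times> nat set set set)"

type_synonym procedure = "proc_input \<Rightarrow> (nat \<times> nat, nat, nat set \<times> nat set set) qtree"

end

theory Submission
  imports Defs
begin

text \<open>
  Every edge of G_{i+1} that is not in G_i joins a vertex u of L_i to a vertex v of
  L_{i-1} \<union> L_i, and then u and v descend from the same part Q_u of the layering tree at
  layer k - 1. Parts have diameter at most l, so the descendants of Q_u in one layer lie in a
  ball of radius at most 2l + 3 around a vertex of Q_u; once Q_u is known, querying d(u, v)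
  for these O(\<Delta>^(2l+3)) candidates v reveals all new edges at u.

  To find Q_u, note that u descends from a part P at layer j iff d(u, x) = i - j for some
  x \<in> P, and that the children of a part contain O(\<Delta>^(l+1)) vertices. Keep a set K of
  parts at layer k - 1 containing Q_u, take the deepest part c of T_k above more than half
  of K, and query u against the children of c: either u descends from a child, which lies
  above at most half of K, or from none, and then u is not below c and more than half of K
  is discarded. After at most log n rounds Q_u is determined.
\<close>

section \<open>Walks, components and the layering tree\<close>

lemma relpow_mono: "(R :: 'a rel) \<subseteq> S \<Longrightarrow> R ^^ n \<subseteq> S ^^ n"
  by (induction n) (simp_all add: relcomp_mono)

locale rooted_graph =
  fixes V :: "nat set" and E :: "nat set set" and s :: nat
  assumes simple: "simple_graph V E" and connected: "connected_graph V E" and root_in_V: "s \<in> V"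
begin

abbreviation depth :: "nat \<Rightarrow> nat" where
  "depth x \<equiv> dist E s x"

lemma finite_V: "finite V"
  using simple by (simp add: simple_graph_def)

lemma adjD: "(u, v) \<in> adj E \<Longrightarrow> u \<in> V \<and> v \<in> V \<and> u \<noteq> v \<and> {u, v} \<in> E"
  using simple unfolding adj_def simple_graph_def by (auto simp: doubleton_eq_iff)

lemma adj_sym: "(u, v) \<in> adj E \<Longrightarrow> (v, u) \<in> adj E"
  by (auto simp: adj_def insert_commute)

lemma walk_sym: "(u, v) \<in> adj E ^^ m \<Longrightarrow> (v, u) \<in> adj E ^^ m"
proof (induction m arbitrary: v)
  case (Suc m)
  then obtain w where "(u, w) \<in> adj E ^^ m" "(w, v) \<in> adj E"
    by (meson relpow_Suc_E)
  then show ?case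
    using Suc.IH adj_sym relpow_Suc_I2 by metis
qed simp

lemma walk_in_V: "(u, v) \<in> adj E ^^ m \<Longrightarrow> u \<in> V \<Longrightarrow> v \<in> V"
  by (cases m) (auto dest: adjD)

lemma dist_walk: "u \<in> V \<Longrightarrow> v \<in> V \<Longrightarrow> (u, v) \<in> adj E ^^ dist E u v"
  using connected unfolding dist_def connected_graph_def by (meson LeastI)

lemma dist_le_walk: "(u, v) \<in> adj E ^^ m \<Longrightarrow> dist E u v \<le> m"
  unfolding dist_def by (rule Least_le)

lemma dist_commute: "u \<in> V \<Longrightarrow> v \<in> V \<Longrightarrow> dist E u v = dist E v u"
  by (meson antisym dist_le_walk dist_walk walk_sym)

lemma dist_triangle: "u \<in> V \<Longrightarrow> v \<in> V \<Longrightarrow> w \<in> V \<Longrightarrow> dist E u w \<le> dist E u v + dist E v w"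
  by (meson dist_le_walk relpow_trans dist_walk)

lemma dist_self: "dist E u u = 0"
  using dist_le_walk[of u u 0] by simp

lemma dist_eq_0D: "u \<in> V \<Longrightarrow> v \<in> V \<Longrightarrow> dist E u v = 0 \<Longrightarrow> u = v"
  using dist_walk[of u v] by simp

lemma dist_eq_1_iff: "u \<in> V \<Longrightarrow> v \<in> V \<Longrightarrow> dist E u v = 1 \<longleftrightarrow> (u, v) \<in> adj E"
  using dist_walk[of u v] dist_le_walk[of u v 1] dist_eq_0D[of u v] adjD[of u v]
  by (cases "dist E u v") auto

lemma walk_source_in_V: "(u, v) \<in> adj E ^^ Suc m \<Longrightarrow> u \<in> V"
  by (erule relpow_Suc_E2) (auto dest: adjD)

lemma depth_walk_le:
  assumes walk: "(u, v) \<in> adj E ^^ m"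
  shows "depth v \<le> depth u + m"
proof (cases m)
  case (Suc n)
  then have "u \<in> V"
    using walk walk_source_in_V by blast
  then have "(s, v) \<in> adj E ^^ (depth u + m)"
    using relpow_trans[OF dist_walk[OF root_in_V] walk] by blast
  then show ?thesis
    by (rule dist_le_walk)
qed (use walk in simp)

lemma depth_adj_le: "(u, v) \<in> adj E \<Longrightarrow> depth v \<le> depth u + 1"
  using depth_walk_le[of u v 1] by simp

definition depth_band :: "nat \<Rightarrow> nat \<Rightarrow> nat set" where
  "depth_band a b = {y \<in> V. a \<le> depth y \<and> depth y \<le> b}"

lemma depth_band_mono: "b \<le> b' \<Longrightarrow> depth_band a b \<subseteq> depth_band a b'"
  by (auto simp: depth_band_def)

text \<open>A walk of length r that increases the depth by r increases it by one in every step,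
  so it stays between the depths of its endpoints.\<close>

lemma geodesic_walk_in_band:
  assumes "(a, x) \<in> adj E ^^ r" "depth x = depth a + r"
  shows "(a, x) \<in> (adj E \<inter> depth_band (depth a) (depth x) \<times> depth_band (depth a) (depth x)) ^^ r"
  using assms
proof (induction r arbitrary: x)
  case (Suc r)
  then obtain y where y: "(a, y) \<in> adj E ^^ r" "(y, x) \<in> adj E"
    by (meson relpow_Suc_E)
  have depth_y: "depth y = depth a + r"
    using depth_walk_le[OF y(1)] depth_adj_le[OF y(2)] Suc.prems(2) by simp
  have "(a, y) \<in> (adj E \<inter> depth_band (depth a) (depth x) \<times> depth_band (depth a) (depth x)) ^^ r"
  proof (rule subsetD[OF relpow_mono Suc.IH[OF y(1) depth_y]])
    have "depth_band (depth a) (depth y) \<subseteq> depth_band (depth a) (depth x)"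
      using depth_y Suc.prems(2) by (intro depth_band_mono) simp
    then show "adj E \<inter> depth_band (depth a) (depth y) \<times> depth_band (depth a) (depth y)
        \<subseteq> adj E \<inter> depth_band (depth a) (depth x) \<times> depth_band (depth a) (depth x)"
      by blast
  qed
  moreover have "(y, x) \<in> adj E \<inter> depth_band (depth a) (depth x) \<times> depth_band (depth a) (depth x)"
    using y(2) adjD[OF y(2)] depth_y Suc.prems(2) by (simp add: depth_band_def)
  ultimately show ?case
    by (rule relpow_Suc_I)
qed simp

lemma ancestor_exists:
  assumes "x \<in> V" "j \<le> depth x"
  obtains a where "a \<in> V" "depth a = j" "(a, x) \<in> adj E ^^ (depth x - j)"
proof -
  have "(s, x) \<in> adj E ^^ (j + (depth x - j))"
    using dist_walk[OF root_in_V assms(1)] assms(2) by simp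
  then obtain a where a: "(s, a) \<in> adj E ^^ j" "(a, x) \<in> adj E ^^ (depth x - j)"
    unfolding relpow_add by blast
  have "depth a = j"
    using dist_le_walk[OF a(1)] depth_walk_le[OF a(2)] assms(2) by simp
  then show ?thesis
    using that a walk_in_V[OF a(1) root_in_V] by blast
qed

lemma neighbour_in_adjacent_layers:
  assumes "(u, v) \<in> adj E" "depth v \<le> depth u"
  shows "v \<in> layer V E s (depth u - 1) \<union> layer V E s (depth u)"
  using depth_adj_le[OF adj_sym[OF assms(1)]] adjD[OF assms(1)] assms(2) by (auto simp: layer_def)

lemma prefix_edges_Suc:
  "{e \<in> E. e \<subseteq> layers_lt V E s (Suc i)} = {e \<in> E. e \<subseteq> layers_lt V E s i} \<union>
    {{u, v} | u v. u \<in> layer V E s i \<and> v \<in> layer V E s (i - 1) \<union> layer V E s i \<and> (u, v) \<in> adj E}"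
    (is "?lhs = ?old \<union> ?new")
proof
  have new_edge: "e \<in> ?new"
    if e: "e = {a, b}" "(a, b) \<in> adj E" "depth a = i" "depth b \<le> i" for e a b
    using neighbour_in_adjacent_layers[OF e(2)] e adjD[OF e(2)] by (auto simp: layer_def)
  moreover have "e \<in> ?old \<union> ?new" if e: "e \<in> E" "e \<subseteq> layers_lt V E s (Suc i)" for e
  proof -
    obtain a b where ab: "e = {a, b}" "a \<noteq> b"
      using e(1) simple unfolding simple_graph_def by blast
    then have adj_ab: "(a, b) \<in> adj E" "(b, a) \<in> adj E"
      using e(1) adj_sym by (auto simp: adj_def)
    have depths: "depth a \<le> i" "depth b \<le> i"
      using e(2) ab(1) by (auto simp: layers_lt_def)
    consider "depth a < i" "depth b < i" | "depth a = i" | "depth b = i"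
      using depths by linarith
    then show ?thesis
    proof cases
      case 1
      then show ?thesis
        using e ab(1) by (auto simp: layers_lt_def)
    next
      case 2
      then show ?thesis
        using new_edge[OF ab(1) adj_ab(1)] depths(2) by blast
    next
      case 3
      then show ?thesis
        using new_edge[of e b a] ab(1) adj_ab(2) depths(1) by (simp add: insert_commute)
    qed
  qed
  ultimately show "?lhs \<subseteq> ?old \<union> ?new"
    by blast
  show "?old \<union> ?new \<subseteq> ?lhs"
    by (auto simp: layers_lt_def layer_def dest: adjD)
qed

abbreviation component :: "nat \<Rightarrow> nat \<Rightarrow> nat set" where
  "component j x \<equiv> component_in E (layers_ge V E s j) x"

lemma component_self: "x \<in> V \<Longrightarrow> j \<le> depth x \<Longrightarrow> x \<in> component j x"
  by (simp add: component_in_def layers_ge_def)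

lemma component_sym:
  assumes "y \<in> component j x"
  shows "x \<in> component j y"
proof -
  let ?W = "layers_ge V E s j"
  let ?R = "adj E \<inter> ?W \<times> ?W"
  have y: "y \<in> ?W" "(x, y) \<in> ?R\<^sup>*"
    using assms by (simp_all add: component_in_def)
  have "x \<in> ?W"
    using y(2)
  proof (cases rule: converse_rtranclE)
    case base
    then show ?thesis
      using y(1) by simp
  qed blast
  moreover have "sym ?R"
    unfolding sym_def using adj_sym by blast
  then have "sym (?R\<^sup>*)"
    by (rule sym_rtrancl)
  then have "(y, x) \<in> ?R\<^sup>*"
    using y(2) unfolding sym_def by blast
  ultimately show ?thesis
    by (simp add: component_in_def)
qed

lemma component_trans: "y \<in> component j x \<Longrightarrow> z \<in> component j y \<Longrightarrow> z \<in> component j x"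
  unfolding component_in_def using rtrancl_trans by fastforce

lemma component_eq: "y \<in> component j x \<Longrightarrow> component j y = component j x"
  using component_sym component_trans by blast

lemma component_antimono:
  assumes "j \<le> j'"
  shows "component j' x \<subseteq> component j x"
proof -
  have W: "layers_ge V E s j' \<subseteq> layers_ge V E s j"
    using assms by (auto simp: layers_ge_def)
  then have "(adj E \<inter> layers_ge V E s j' \<times> layers_ge V E s j')\<^sup>*
      \<subseteq> (adj E \<inter> layers_ge V E s j \<times> layers_ge V E s j)\<^sup>*"
    by (intro rtrancl_mono) blast
  then show ?thesis
    using W by (auto simp: component_in_def)
qed

lemma component_adj: "(x, y) \<in> adj E \<Longrightarrow> j \<le> depth x \<Longrightarrow> j \<le> depth y \<Longrightarrow> y \<in> component j x"
proof -
  assume xy: "(x, y) \<in> adj E" and depths: "j \<le> depth x" "j \<le> depth y"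
  then have "(x, y) \<in> adj E \<inter> layers_ge V E s j \<times> layers_ge V E s j"
    using adjD[OF xy] by (simp add: layers_ge_def)
  then show ?thesis
    using adjD[OF xy] depths(2) by (auto simp: component_in_def layers_ge_def)
qed

lemma geodesic_in_component:
  assumes "(a, x) \<in> adj E ^^ r" "depth x = depth a + r" "a \<in> V" "j \<le> depth a"
  shows "x \<in> component j a"
proof -
  let ?W = "layers_ge V E s j"
  have "depth_band (depth a) (depth x) \<subseteq> ?W"
    using assms(4) by (auto simp: depth_band_def layers_ge_def)
  then have "adj E \<inter> depth_band (depth a) (depth x) \<times> depth_band (depth a) (depth x)
      \<subseteq> adj E \<inter> ?W \<times> ?W"
    by blast
  then have "(a, x) \<in> (adj E \<inter> ?W \<times> ?W) ^^ r"
    using relpow_mono geodesic_walk_in_band[OF assms(1,2)] by blast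
  then have "(a, x) \<in> (adj E \<inter> ?W \<times> ?W)\<^sup>*"
    by (rule relpow_imp_rtrancl)
  moreover have "x \<in> ?W"
    using walk_in_V[OF assms(1,3)] assms(2,4) by (simp add: layers_ge_def)
  ultimately show ?thesis
    by (simp add: component_in_def)
qed

lemma part_nonempty: "P \<in> parts_at V E s j \<Longrightarrow> P \<noteq> {}"
  and part_subset_layer: "P \<in> parts_at V E s j \<Longrightarrow> P \<subseteq> layer V E s j"
  and part_eq_component: "P \<in> parts_at V E s j \<Longrightarrow> p \<in> P \<Longrightarrow> P = component j p \<inter> layer V E s j"
proof -
  assume "P \<in> parts_at V E s j"
  then obtain x where x: "x \<in> V" "depth x = j" "P = component j x \<inter> layer V E s j"
    by (auto simp: parts_at_def layer_def)
  then show "P \<noteq> {}" "P \<subseteq> layer V E s j"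
    using component_self[OF x(1)] by (auto simp: layer_def)
  show "p \<in> P \<Longrightarrow> P = component j p \<inter> layer V E s j"
    using x(3) component_eq by auto
qed

lemma part_of_vertex:
  assumes "x \<in> layer V E s j"
  shows "component j x \<inter> layer V E s j \<in> parts_at V E s j" "x \<in> component j x \<inter> layer V E s j"
  using assms component_self unfolding parts_at_def layer_def by auto

lemma parts_at_disjoint:
  "P \<in> parts_at V E s j \<Longrightarrow> P' \<in> parts_at V E s j \<Longrightarrow> p \<in> P \<Longrightarrow> p \<in> P' \<Longrightarrow> P = P'"
  using part_eq_component by metis

lemma part_depth: "P \<in> parts_at V E s j \<Longrightarrow> p \<in> P \<Longrightarrow> p \<in> V \<and> depth p = j"
  using part_subset_layer by (fastforce simp: layer_def)

lemma root_part: "{s} \<in> parts_at V E s 0"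
proof -
  have "layer V E s 0 = {s}"
    using dist_eq_0D[OF root_in_V] root_in_V dist_self by (auto simp: layer_def)
  then show ?thesis
    using part_of_vertex(1)[of s 0] component_self[OF root_in_V] by auto
qed

text \<open>In the layering tree, x lies in the subtree rooted at the part P of layer j.\<close>

definition descends_from :: "nat \<Rightarrow> nat set \<Rightarrow> nat \<Rightarrow> bool" where
  "descends_from j P x \<longleftrightarrow> (\<exists>p\<in>P. x \<in> component j p)"

lemma descends_from_root: "x \<in> V \<Longrightarrow> descends_from 0 {s} x"
  using geodesic_in_component[OF dist_walk[OF root_in_V] _ root_in_V, of x 0]
  by (simp add: descends_from_def dist_self)

lemma descends_from_part_self: "P \<in> parts_at V E s j \<Longrightarrow> x \<in> P \<Longrightarrow> descends_from j P x"
  using part_depth component_self unfolding descends_from_def by blast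

lemma descends_from_iff_walk:
  assumes P: "P \<in> parts_at V E s j" and x: "x \<in> V" "j \<le> depth x"
  shows "descends_from j P x \<longleftrightarrow> (\<exists>p\<in>P. (p, x) \<in> adj E ^^ (depth x - j))"
proof
  assume "descends_from j P x"
  then obtain p where p: "p \<in> P" "x \<in> component j p"
    by (auto simp: descends_from_def)
  obtain a where a: "a \<in> V" "depth a = j" "(a, x) \<in> adj E ^^ (depth x - j)"
    using ancestor_exists[OF x] .
  have "x \<in> component j a"
    using geodesic_in_component[OF a(3) _ a(1)] a(2) x(2) by simp
  then have "a \<in> component j p"
    using p(2) component_sym component_trans by blast
  then have "a \<in> P"
    using part_eq_component[OF P p(1)] a by (simp add: layer_def)
  then show "\<exists>p\<in>P. (p, x) \<in> adj E ^^ (depth x - j)"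
    using a(3) by blast
next
  assume "\<exists>p\<in>P. (p, x) \<in> adj E ^^ (depth x - j)"
  then obtain p where p: "p \<in> P" "(p, x) \<in> adj E ^^ (depth x - j)"
    by blast
  then show "descends_from j P x"
    using geodesic_in_component[OF p(2)] part_depth[OF P p(1)] x(2)
    unfolding descends_from_def by auto
qed

lemma descends_from_iff_dist:
  assumes P: "P \<in> parts_at V E s j" and x: "x \<in> V" "j \<le> depth x"
  shows "descends_from j P x \<longleftrightarrow> (\<exists>p\<in>P. dist E p x = depth x - j)"
proof -
  have "(p, x) \<in> adj E ^^ (depth x - j) \<longleftrightarrow> dist E p x = depth x - j" if p: "p \<in> P" for p
  proof
    have p_V: "p \<in> V" "depth p = j"
      using part_depth[OF P p] by auto
    {
      assume "(p, x) \<in> adj E ^^ (depth x - j)"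
      then have "dist E p x \<le> depth x - j"
        by (rule dist_le_walk)
      moreover have "depth x \<le> depth p + dist E p x"
        by (rule dist_triangle[OF root_in_V p_V(1) x(1)])
      ultimately show "dist E p x = depth x - j"
        using p_V(2) by linarith
    }
    assume "dist E p x = depth x - j"
    then show "(p, x) \<in> adj E ^^ (depth x - j)"
      using dist_walk[OF p_V(1) x(1)] by simp
  qed
  then show ?thesis
    using descends_from_iff_walk[OF assms] by blast
qed

lemma descends_from_iff_prefix_walk:
  assumes P: "P \<in> parts_at V E s j" and x: "x \<in> V" "j \<le> depth x" "depth x < i"
  shows "descends_from j P x \<longleftrightarrow>
    (\<exists>p\<in>P. (p, x) \<in> adj {e \<in> E. e \<subseteq> layers_lt V E s i} ^^ (depth x - j))"
proof -
  let ?F = "{e \<in> E. e \<subseteq> layers_lt V E s i}"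
  have "(p, x) \<in> adj E ^^ (depth x - j) \<longleftrightarrow> (p, x) \<in> adj ?F ^^ (depth x - j)" if p: "p \<in> P" for p
  proof
    assume walk: "(p, x) \<in> adj E ^^ (depth x - j)"
    have "depth x = depth p + (depth x - j)"
      using part_depth[OF P p] x(2) by simp
    note band_walk = geodesic_walk_in_band[OF walk this]
    have "adj E \<inter> depth_band (depth p) (depth x) \<times> depth_band (depth p) (depth x) \<subseteq> adj ?F"
      using x(3) by (auto simp: adj_def depth_band_def layers_lt_def)
    then show "(p, x) \<in> adj ?F ^^ (depth x - j)"
      using relpow_mono band_walk by blast
  next
    have "adj ?F \<subseteq> adj E"
      by (auto simp: adj_def)
    then show "(p, x) \<in> adj ?F ^^ (depth x - j) \<Longrightarrow> (p, x) \<in> adj E ^^ (depth x - j)"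
      using relpow_mono by blast
  qed
  then show ?thesis
    using descends_from_iff_walk[OF P x(1,2)] by blast
qed

lemma descends_from_exists:
  assumes "x \<in> V" "j \<le> depth x"
  obtains P where "P \<in> parts_at V E s j" "descends_from j P x"
proof -
  obtain a where a: "a \<in> V" "depth a = j" "(a, x) \<in> adj E ^^ (depth x - j)"
    using ancestor_exists[OF assms] .
  then have a_layer: "a \<in> layer V E s j"
    by (simp add: layer_def)
  have "x \<in> component j a"
    using geodesic_in_component[OF a(3) _ a(1)] a(2) assms(2) by simp
  then have "descends_from j (component j a \<inter> layer V E s j) x"
    using part_of_vertex(2)[OF a_layer] unfolding descends_from_def by blast
  then show ?thesis
    using that part_of_vertex(1)[OF a_layer] by blast
qed

lemma descends_from_transfer:
  assumes Q: "Q \<in> parts_at V E s j'" "q \<in> Q" "descends_from j' Q u" and "j \<le> j'"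
  shows "descends_from j P u \<longleftrightarrow> descends_from j P q"
proof -
  obtain q' where q': "q' \<in> Q" "u \<in> component j' q'"
    using Q(3) by (auto simp: descends_from_def)
  have "component j' q' = component j' q"
    using part_eq_component[OF Q(1)] Q(2) q'(1) component_eq by blast
  then have "u \<in> component j q"
    using q'(2) component_antimono[OF \<open>j \<le> j'\<close>] by blast
  then have "component j u = component j q"
    by (rule component_eq)
  then show ?thesis
    unfolding descends_from_def using component_sym by blast
qed

lemma descends_from_same_layer:
  assumes "P \<in> parts_at V E s j" "q \<in> layer V E s j" "descends_from j P q"
  shows "q \<in> P"
proof -
  obtain p where "p \<in> P" "q \<in> component j p"
    using assms(3) by (auto simp: descends_from_def)
  then show ?thesis
    using part_eq_component[OF assms(1)] assms(2) by blast
qed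

lemma descends_from_unique:
  assumes "P \<in> parts_at V E s j" "descends_from j P u" "P' \<in> parts_at V E s j" "descends_from j P' u"
  shows "P = P'"
proof -
  obtain p' where p': "p' \<in> P'"
    using part_nonempty[OF assms(3)] by blast
  then have "descends_from j P p'"
    using descends_from_transfer[OF assms(3) p' assms(4)] assms(2) by blast
  then have "p' \<in> P"
    using descends_from_same_layer assms(1) part_subset_layer[OF assms(3)] p' by blast
  then show ?thesis
    using parts_at_disjoint assms(1,3) p' by blast
qed

definition ancestor_part :: "nat \<Rightarrow> nat \<Rightarrow> nat set" where
  "ancestor_part j x = (THE P. P \<in> parts_at V E s j \<and> descends_from j P x)"

lemma ancestor_part_eq: "P \<in> parts_at V E s j \<Longrightarrow> descends_from j P x \<Longrightarrow> ancestor_part j x = P"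
  unfolding ancestor_part_def by (rule the_equality) (use descends_from_unique in blast)+

lemma ancestor_part:
  assumes "x \<in> V" "j \<le> depth x"
  shows "ancestor_part j x \<in> parts_at V E s j" "descends_from j (ancestor_part j x) x"
proof -
  obtain P where "P \<in> parts_at V E s j" "descends_from j P x"
    using descends_from_exists[OF assms] .
  then show "ancestor_part j x \<in> parts_at V E s j" "descends_from j (ancestor_part j x) x"
    using ancestor_part_eq by simp_all
qed

abbreviation \<Delta> :: nat where
  "\<Delta> \<equiv> max_degree V E"

lemma card_V_pos: "0 < card V"
  using root_in_V finite_V card_gt_0_iff by blast

lemma finite_layer: "finite (layer V E s j)"
  using finite_V by (simp add: layer_def)

lemma finite_parts_at: "finite (parts_at V E s j)"
  and card_parts_at_le: "card (parts_at V E s j) \<le> card V"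
proof -
  have parts: "parts_at V E s j = (\<lambda>x. component j x \<inter> layer V E s j) ` layer V E s j"
    unfolding parts_at_def by blast
  then show "finite (parts_at V E s j)"
    using finite_layer by simp
  have "card (parts_at V E s j) \<le> card (layer V E s j)"
    unfolding parts by (rule card_image_le[OF finite_layer])
  also have "\<dots> \<le> card V"
    by (rule card_mono[OF finite_V]) (auto simp: layer_def)
  finally show "card (parts_at V E s j) \<le> card V" .
qed

lemma card_parts_subset_pos:
  assumes "K \<subseteq> parts_at V E s j" "P \<in> K"
  shows "0 < card K"
  using finite_subset[OF assms(1) finite_parts_at] assms(2) by (auto simp: card_gt_0_iff)

lemma card_neighbours_le: "y \<in> V \<Longrightarrow> card {v. (y, v) \<in> adj E} \<le> \<Delta>"
  using finite_V unfolding max_degree_def degree_def adj_def by simp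

lemma card_sphere_le:
  assumes "p \<in> V"
  shows "card {x \<in> V. dist E p x = t} \<le> \<Delta> ^ t"
proof (induction t)
  case 0
  have "{x \<in> V. dist E p x = 0} \<subseteq> {p}"
    using dist_eq_0D[OF assms] by blast
  then show ?case
    using card_mono[of "{p}"] by simp
next
  case (Suc t)
  let ?S = "{x \<in> V. dist E p x = t}"
  have sphere: "{x \<in> V. dist E p x = Suc t} \<subseteq> (\<Union>y\<in>?S. {v. (y, v) \<in> adj E})"
  proof
    fix x
    assume x: "x \<in> {x \<in> V. dist E p x = Suc t}"
    then have "(p, x) \<in> adj E ^^ Suc t"
      using dist_walk[OF assms, of x] by simp
    then obtain y where y: "(p, y) \<in> adj E ^^ t" "(y, x) \<in> adj E"
      by (meson relpow_Suc_E)
    have "y \<in> V"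
      using adjD[OF y(2)] by blast
    then have "dist E p y = t"
      using dist_le_walk[OF y(1)] dist_triangle[OF assms _, of y x] dist_le_walk[of y x 1] y(2) x
      by fastforce
    then show "x \<in> (\<Union>y\<in>?S. {v. (y, v) \<in> adj E})"
      using \<open>y \<in> V\<close> y(2) by blast
  qed
  have finite_neighbours: "finite {v. (y, v) \<in> adj E}" for y
    using finite_V adjD by (metis (no_types, lifting) finite_subset mem_Collect_eq subsetI)
  have "card {x \<in> V. dist E p x = Suc t} \<le> card (\<Union>y\<in>?S. {v. (y, v) \<in> adj E})"
    using sphere finite_V finite_neighbours by (intro card_mono) auto
  also have "\<dots> \<le> (\<Sum>y\<in>?S. card {v. (y, v) \<in> adj E})"
    by (rule card_UN_le) (use finite_V in simp)
  also have "\<dots> \<le> card ?S * \<Delta>"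
    using sum_bounded_above[of ?S "\<lambda>y. card {v. (y, v) \<in> adj E}" \<Delta>] card_neighbours_le by simp
  also have "\<dots> \<le> \<Delta> ^ Suc t"
    using Suc.IH by (simp add: mult.commute)
  finally show ?case .
qed

end

lemma sum_powers_le_twice_last: "2 \<le> d \<Longrightarrow> (\<Sum>t\<le>r. d ^ t) \<le> 2 * (d :: nat) ^ r"
proof (induction r)
  case (Suc r)
  have "2 * d ^ r \<le> d ^ Suc r"
    using Suc.prems by simp
  then show ?case
    unfolding sum.atMost_Suc using Suc.IH[OF Suc.prems] by linarith
qed simp

locale layered_graph = rooted_graph +
  fixes l :: nat
  assumes max_degree_ge_2: "2 \<le> max_degree V E"
    and tree_length_le: "tree_length V E s \<le> l"
begin

lemma power_\<Delta>_mono: "a \<le> b \<Longrightarrow> \<Delta> ^ a \<le> \<Delta> ^ b"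
  using max_degree_ge_2 by (simp add: power_increasing)

lemma card_ball_le:
  assumes "p \<in> V"
  shows "card {x \<in> V. dist E p x \<le> r} \<le> 2 * \<Delta> ^ r"
proof -
  have "{x \<in> V. dist E p x \<le> r} = (\<Union>t\<le>r. {x \<in> V. dist E p x = t})"
    by auto
  then have "card {x \<in> V. dist E p x \<le> r} \<le> (\<Sum>t\<le>r. card {x \<in> V. dist E p x = t})"
    using card_UN_le[of "{..r}"] by simp
  also have "\<dots> \<le> (\<Sum>t\<le>r. \<Delta> ^ t)"
    using card_sphere_le[OF assms] by (intro sum_mono)
  also have "\<dots> \<le> 2 * \<Delta> ^ r"
    using max_degree_ge_2 by (rule sum_powers_le_twice_last)
  finally show ?thesis .
qed

lemma card_layer_le: "card (layer V E s m) \<le> 2 * \<Delta> ^ m"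
proof -
  have "card (layer V E s m) \<le> card {x \<in> V. dist E s x \<le> m}"
    using finite_V by (intro card_mono) (auto simp: layer_def)
  also have "\<dots> \<le> 2 * \<Delta> ^ m"
    by (rule card_ball_le[OF root_in_V])
  finally show ?thesis .
qed

lemma part_dist_le:
  assumes "P \<in> parts_at V E s j" "p \<in> P" "q \<in> P"
  shows "dist E p q \<le> l"
proof -
  let ?X = "{dist E u v | u v P. P \<in> parts V E s \<and> u \<in> P \<and> v \<in> P}"
  have "?X \<subseteq> (\<lambda>(u, v). dist E u v) ` (V \<times> V)"
    using part_depth by (force simp: parts_def)
  then have "finite ?X"
    using finite_V by (meson finite_SigmaI finite_imageI finite_subset)
  moreover have "dist E p q \<in> ?X"
    using assms unfolding parts_def by blast
  ultimately have "dist E p q \<le> tree_length V E s"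
    unfolding tree_length_def by (rule Max_ge)
  then show ?thesis
    using tree_length_le by simp
qed

lemma card_descendants_in_layer_le:
  assumes P: "P \<in> parts_at V E s j" and "j \<le> m"
  shows "card {x \<in> layer V E s m. descends_from j P x} \<le> 2 * \<Delta> ^ (l + (m - j))"
proof -
  obtain p0 where p0: "p0 \<in> P"
    using part_nonempty[OF P] by blast
  have p0_V: "p0 \<in> V"
    using part_depth[OF P p0] by blast
  have "{x \<in> layer V E s m. descends_from j P x} \<subseteq> {x \<in> V. dist E p0 x \<le> l + (m - j)}"
  proof
    fix x
    assume x: "x \<in> {x \<in> layer V E s m. descends_from j P x}"
    then have x_V: "x \<in> V" "depth x = m"
      by (auto simp: layer_def)
    then obtain p where p: "p \<in> P" "dist E p x = m - j"
      using descends_from_iff_dist[OF P x_V(1)] x \<open>j \<le> m\<close> by auto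
    have "dist E p0 x \<le> dist E p0 p + dist E p x"
      using part_depth[OF P p(1)] by (intro dist_triangle[OF p0_V _ x_V(1)]) blast
    also have "\<dots> \<le> l + (m - j)"
      using part_dist_le[OF P p0 p(1)] p(2) by simp
    finally show "x \<in> {x \<in> V. dist E p0 x \<le> l + (m - j)}"
      using x_V by simp
  qed
  then have "card {x \<in> layer V E s m. descends_from j P x} \<le> card {x \<in> V. dist E p0 x \<le> l + (m - j)}"
    using finite_V by (intro card_mono) auto
  also have "\<dots> \<le> 2 * \<Delta> ^ (l + (m - j))"
    by (rule card_ball_le[OF p0_V])
  finally show ?thesis .
qed

end

section \<open>Query procedures\<close>

primrec qtree_bind :: "('q, 'a, 'r) qtree \<Rightarrow> ('r \<Rightarrow> ('q, 'a, 'r') qtree) \<Rightarrow> ('q, 'a, 'r') qtree" where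
  "qtree_bind (Ret r) g = g r"
| "qtree_bind (Ask q f) g = Ask q (\<lambda>a. qtree_bind (f a) g)"

lemma run_result_qtree_bind [simp]:
  "run_result orc (qtree_bind t g) = run_result orc (g (run_result orc t))"
  by (induction t) auto

lemma run_queries_qtree_bind [simp]:
  "run_queries orc (qtree_bind t g) = run_queries orc t + run_queries orc (g (run_result orc t))"
  by (induction t) auto

fun ask_all :: "'q list \<Rightarrow> ('q, 'a, 'q \<Rightarrow> 'a) qtree" where
  "ask_all [] = Ret (\<lambda>_. undefined)"
| "ask_all (q # qs) = Ask q (\<lambda>a. qtree_bind (ask_all qs) (\<lambda>f. Ret (f(q := a))))"

lemma run_result_ask_all: "q \<in> set qs \<Longrightarrow> run_result orc (ask_all qs) q = orc q"
  by (induction qs) auto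

lemma run_queries_ask_all [simp]: "run_queries orc (ask_all qs) = length qs"
  by (induction qs) auto

fun run_all :: "('x \<Rightarrow> ('q, 'a, 'r) qtree) \<Rightarrow> 'x list \<Rightarrow> ('q, 'a, 'x \<Rightarrow> 'r) qtree" where
  "run_all g [] = Ret (\<lambda>_. undefined)"
| "run_all g (x # xs) = qtree_bind (g x) (\<lambda>r. qtree_bind (run_all g xs) (\<lambda>h. Ret (h(x := r))))"

lemma run_result_run_all: "x \<in> set xs \<Longrightarrow> run_result orc (run_all g xs) x = run_result orc (g x)"
  by (induction xs) auto

lemma run_queries_run_all: "run_queries orc (run_all g xs) = (\<Sum>x\<leftarrow>xs. run_queries orc (g x))"
  by (induction xs) auto

lemma log2_le_pred:
  assumes "1 \<le> y" "2 * y \<le> (x :: real)"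
  shows "log 2 y \<le> log 2 x - 1"
proof -
  have "log 2 y \<le> log 2 (x / 2)"
    using assms by (subst log_le_cancel_iff) auto
  also have "\<dots> = log 2 x - 1"
    using assms by (simp add: log_divide)
  finally show ?thesis .
qed

lemma log2_le_twice_ln:
  assumes "1 \<le> x"
  shows "log 2 x \<le> 2 * ln (x :: real)"
proof -
  have "ln (inverse 2 :: real) \<le> inverse 2 - 1"
    by (rule ln_le_minus_one) simp
  then have "- ln (2 :: real) \<le> inverse 2 - 1"
    by (simp only: ln_inverse)
  then have "ln x * 1 \<le> ln x * (2 * ln 2)"
    using assms by (intro mult_left_mono) simp_all
  then show ?thesis
    by (simp add: log_def divide_le_eq algebra_simps)
qed

section \<open>The procedure\<close>

text \<open>The input of the procedure: the layers L, the edge set F of G_i, the set Ps of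
  parts of T_k, the depth k, and i = k + l + 2.\<close>

locale layering_input =
  fixes L :: "nat \<Rightarrow> nat set" and F :: "nat set set" and Ps :: "nat set set" and k i :: nat
begin

definition parts_in_layer :: "nat \<Rightarrow> nat set set" where
  "parts_in_layer j = {P \<in> Ps. P \<noteq> {} \<and> P \<subseteq> L j}"

definition walk_from :: "nat set \<Rightarrow> nat \<Rightarrow> nat \<Rightarrow> bool" where
  "walk_from P x r \<longleftrightarrow> (\<exists>p\<in>P. (p, x) \<in> adj F ^^ r)"

definition leaves_below :: "nat \<Rightarrow> nat set \<Rightarrow> nat set set" where
  "leaves_below j c = {Q \<in> parts_in_layer (k - 1). \<exists>q\<in>Q. walk_from c q (k - 1 - j)}"

definition children :: "nat \<Rightarrow> nat set \<Rightarrow> nat set set" where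
  "children j c = {c' \<in> parts_in_layer (Suc j). \<exists>x\<in>c'. walk_from c x 1}"

definition heavy :: "nat set set \<Rightarrow> nat \<Rightarrow> nat set \<Rightarrow> bool" where
  "heavy K j c \<longleftrightarrow> j < k \<and> c \<in> parts_in_layer j \<and> card K < 2 * card (leaves_below j c \<inter> K)"

definition heavy_depth :: "nat set set \<Rightarrow> nat" where
  "heavy_depth K = Max {j. \<exists>c. heavy K j c}"

definition heavy_part :: "nat set set \<Rightarrow> nat set" where
  "heavy_part K = (SOME c. heavy K (heavy_depth K) c)"

definition probe_set :: "nat set set \<Rightarrow> nat set" where
  "probe_set K = \<Union> (children (heavy_depth K) (heavy_part K))"

definition hit_children :: "nat \<Rightarrow> nat set set \<Rightarrow> (nat \<times> nat \<Rightarrow> nat) \<Rightarrow> nat set set" where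
  "hit_children u K ans = {c' \<in> children (heavy_depth K) (heavy_part K).
      \<exists>x\<in>c'. ans (u, x) = i - Suc (heavy_depth K)}"

definition refine :: "nat \<Rightarrow> nat set set \<Rightarrow> (nat \<times> nat \<Rightarrow> nat) \<Rightarrow> nat set set" where
  "refine u K ans =
     (if hit_children u K ans \<noteq> {}
      then K \<inter> leaves_below (Suc (heavy_depth K)) (SOME c'. c' \<in> hit_children u K ans)
      else K - leaves_below (heavy_depth K) (heavy_part K))"

fun locate :: "nat \<Rightarrow> nat \<Rightarrow> nat set set \<Rightarrow> (nat \<times> nat, nat, nat set set) qtree" where
  "locate 0 u K = Ret K"
| "locate (Suc f) u K =
     (if card K \<le> 1 then Ret K
      else qtree_bind (ask_all (map (Pair u) (sorted_list_of_set (probe_set K))))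
             (\<lambda>ans. locate f u (refine u K ans)))"

definition locate_part :: "nat \<Rightarrow> (nat \<times> nat, nat, nat set set) qtree" where
  "locate_part u = locate (card (parts_in_layer (k - 1))) u (parts_in_layer (k - 1))"

definition candidates :: "(nat \<Rightarrow> nat set set) \<Rightarrow> nat \<Rightarrow> nat set" where
  "candidates m u =
     (if k = 0 then L (i - 1) \<union> L i
      else {v \<in> L (i - 1). \<exists>Q\<in>m u. walk_from Q v (i - k)} \<union> {x \<in> L i. m x = m u})"

definition candidate_queries :: "(nat \<Rightarrow> nat set set) \<Rightarrow> (nat \<times> nat) list" where
  "candidate_queries m =
     concat (map (\<lambda>u. map (Pair u) (sorted_list_of_set (candidates m u))) (sorted_list_of_set (L i)))"

definition next_prefix :: "(nat \<Rightarrow> nat set set) \<Rightarrow> (nat \<times> nat \<Rightarrow> nat) \<Rightarrow> nat set \<times> nat set set" where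
  "next_prefix m ans =
     ((\<Union>j\<le>i. L j), F \<union> {{u, v} | u v. (u, v) \<in> set (candidate_queries m) \<and> ans (u, v) = 1})"

definition extension :: "(nat \<times> nat, nat, nat set \<times> nat set set) qtree" where
  "extension =
     qtree_bind (run_all locate_part (sorted_list_of_set (L i)))
       (\<lambda>m. qtree_bind (ask_all (candidate_queries m)) (\<lambda>ans. Ret (next_prefix m ans)))"

end

definition extend_prefix :: procedure where
  "extend_prefix input =
     (case input of (l, k, L, (W, F), (Ps, Es)) \<Rightarrow> layering_input.extension L F Ps k (k + l + 2))"

section \<open>Correctness and number of queries\<close>

locale layer_extension =
  layered_graph V E s l +
  layering_input "layer V E s" "{e \<in> E. e \<subseteq> layers_lt V E s i}" "\<Union>j<k. parts_at V E s j" k i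
  for V E s l k i +
  assumes i_eq: "i = k + l + 2"
begin

lemma extend_prefix_eq:
  "extend_prefix (l, k, layer V E s, graph_prefix V E s i, tree_prefix V E s k) = extension"
  by (simp add: extend_prefix_def graph_prefix_def tree_prefix_def Let_def i_eq)

lemma parts_in_layer_eq:
  assumes "j < k"
  shows "parts_in_layer j = parts_at V E s j"
proof -
  have "P \<in> parts_at V E s j"
    if P: "P \<in> parts_at V E s j'" "P \<noteq> {}" "P \<subseteq> layer V E s j" for P j'
  proof -
    obtain p where "p \<in> P"
      using P(2) by blast
    then have "j' = j"
      using part_depth[OF P(1)] P(3) by (auto simp: layer_def)
    then show ?thesis
      using P(1) by simp
  qed
  then show ?thesis
    unfolding parts_in_layer_def using assms part_nonempty part_subset_layer by blast
qed

lemma walk_from_iff_descends_from: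
  assumes "c \<in> parts_at V E s j" "x \<in> V" "j \<le> depth x" "depth x < i"
  shows "walk_from c x (depth x - j) \<longleftrightarrow> descends_from j c x"
  using descends_from_iff_prefix_walk[OF assms] by (simp add: walk_from_def)

lemma leaves_below_eq:
  assumes "1 \<le> k" "j \<le> k - 1" "c \<in> parts_at V E s j"
  shows "leaves_below j c = {Q \<in> parts_at V E s (k - 1). \<exists>q\<in>Q. descends_from j c q}"
proof -
  have "walk_from c q (k - 1 - j) \<longleftrightarrow> descends_from j c q"
    if "Q \<in> parts_at V E s (k - 1)" "q \<in> Q" for Q q
  proof -
    have "q \<in> V" "depth q = k - 1"
      using part_depth[OF that] by auto
    then show ?thesis
      using walk_from_iff_descends_from[OF assms(3), of q] assms(2) i_eq by simp
  qed
  then show ?thesis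
    unfolding leaves_below_def using parts_in_layer_eq[of "k - 1"] assms(1) by auto
qed

lemma children_eq:
  assumes "Suc j < k" "c \<in> parts_at V E s j"
  shows "children j c = {c' \<in> parts_at V E s (Suc j). \<exists>x\<in>c'. descends_from j c x}"
proof -
  have "walk_from c x 1 \<longleftrightarrow> descends_from j c x"
    if "c' \<in> parts_at V E s (Suc j)" "x \<in> c'" for c' x
  proof -
    have "x \<in> V" "depth x = Suc j"
      using part_depth[OF that] by auto
    then show ?thesis
      using walk_from_iff_descends_from[OF assms(2), of x] assms(1) i_eq by simp
  qed
  then show ?thesis
    unfolding children_def using parts_in_layer_eq[OF assms(1)] by auto
qed

lemma heavy_root:
  assumes "1 \<le> k" "K \<subseteq> parts_at V E s (k - 1)" "K \<noteq> {}"
  shows "heavy K 0 {s}"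
proof -
  have "leaves_below 0 {s} = parts_at V E s (k - 1)"
    using leaves_below_eq[OF assms(1) _ root_part] descends_from_root part_depth part_nonempty
    by fastforce
  moreover have "finite K"
    using assms(2) finite_parts_at finite_subset by blast
  ultimately show ?thesis
    unfolding heavy_def using assms parts_in_layer_eq[of 0] root_part
    by (simp add: Int_absorb1 card_gt_0_iff)
qed

lemma heavy_depth:
  assumes "1 \<le> k" "K \<subseteq> parts_at V E s (k - 1)" "K \<noteq> {}"
  shows "heavy K (heavy_depth K) (heavy_part K)" "heavy K j c \<Longrightarrow> j \<le> heavy_depth K"
proof -
  let ?J = "{j. \<exists>c. heavy K j c}"
  have "finite ?J"
    by (rule finite_subset[of _ "{..<k}"]) (auto simp: heavy_def)
  moreover have "0 \<in> ?J"
    using heavy_root[OF assms] by blast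
  ultimately have "heavy_depth K \<in> ?J"
    unfolding heavy_depth_def using Max_in by blast
  then show "heavy K (heavy_depth K) (heavy_part K)"
    unfolding heavy_part_def by (auto intro: someI)
  show "heavy K j c \<Longrightarrow> j \<le> heavy_depth K"
    unfolding heavy_depth_def using \<open>finite ?J\<close> by (auto intro: Max_ge)
qed

lemma heavy_above_last_layer:
  assumes "K \<subseteq> parts_at V E s (k - 1)" "2 \<le> card K" "heavy K j c"
  shows "Suc j < k"
proof (rule ccontr)
  assume "\<not> Suc j < k"
  then have j: "j = k - 1" "1 \<le> k"
    using assms(3) by (auto simp: heavy_def)
  then have c: "c \<in> parts_at V E s j"
    using assms(3) parts_in_layer_eq by (simp add: heavy_def)
  have "Q = c" if "Q \<in> parts_at V E s j" "q \<in> Q" "descends_from j c q" for Q q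
    using descends_from_same_layer[OF c _ that(3)] part_subset_layer[OF that(1)] that(2)
      parts_at_disjoint[OF that(1) c that(2)] by blast
  then have "leaves_below j c \<inter> K \<subseteq> {c}"
    using leaves_below_eq[OF j(2) _ c] j(1) by auto
  then have "card (leaves_below j c \<inter> K) \<le> 1"
    using card_mono[of "{c}"] by fastforce
  then show False
    using assms(2,3) by (simp add: heavy_def)
qed

lemma heavy_part:
  assumes "1 \<le> k" "K \<subseteq> parts_at V E s (k - 1)" "2 \<le> card K"
  shows "heavy K (heavy_depth K) (heavy_part K)" "Suc (heavy_depth K) < k"
    "heavy_part K \<in> parts_at V E s (heavy_depth K)"
proof -
  have "K \<noteq> {}"
    using assms(3) by auto
  then show heavy: "heavy K (heavy_depth K) (heavy_part K)"
    using heavy_depth(1)[OF assms(1,2)] by blast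
  then show "Suc (heavy_depth K) < k" "heavy_part K \<in> parts_at V E s (heavy_depth K)"
    using heavy_above_last_layer[OF assms(2,3)] parts_in_layer_eq by (auto simp: heavy_def)
qed

lemma probe_set_subset:
  assumes "1 \<le> k" "K \<subseteq> parts_at V E s (k - 1)" "2 \<le> card K"
  shows "probe_set K \<subseteq>
    {x \<in> layer V E s (Suc (heavy_depth K)). descends_from (heavy_depth K) (heavy_part K) x}"
proof -
  let ?j = "heavy_depth K" and ?c = "heavy_part K"
  note j = heavy_part(2)[OF assms] and c = heavy_part(3)[OF assms]
  have "x \<in> layer V E s (Suc ?j) \<and> descends_from ?j ?c x"
    if c': "c' \<in> parts_at V E s (Suc ?j)" "y \<in> c'" "descends_from ?j ?c y" "x \<in> c'" for c' x y
  proof -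
    have "descends_from ?j ?c x \<longleftrightarrow> descends_from ?j ?c y"
      by (rule descends_from_transfer[OF c'(1,2) descends_from_part_self[OF c'(1,4)]]) simp
    then show ?thesis
      using part_subset_layer[OF c'(1)] c'(3,4) by blast
  qed
  then show ?thesis
    unfolding probe_set_def children_eq[OF j c] by blast
qed

lemma card_probe_set_le:
  assumes "1 \<le> k" "K \<subseteq> parts_at V E s (k - 1)" "2 \<le> card K"
  shows "finite (probe_set K)" "card (probe_set K) \<le> 2 * \<Delta> ^ (l + 1)"
proof -
  let ?j = "heavy_depth K" and ?c = "heavy_part K"
  have "card {x \<in> layer V E s (Suc ?j). descends_from ?j ?c x} \<le> 2 * \<Delta> ^ (l + 1)"
    using card_descendants_in_layer_le[OF heavy_part(3)[OF assms], of "Suc ?j"] by simp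
  moreover have "finite {x \<in> layer V E s (Suc ?j). descends_from ?j ?c x}"
    using finite_layer by simp
  ultimately show "finite (probe_set K)" "card (probe_set K) \<le> 2 * \<Delta> ^ (l + 1)"
    using card_mono[OF _ probe_set_subset[OF assms]] finite_subset[OF probe_set_subset[OF assms]]
    by auto
qed

context
  fixes u :: nat and K :: "nat set set" and ans :: "nat \<times> nat \<Rightarrow> nat"
  assumes k_pos: "1 \<le> k" and u: "u \<in> layer V E s i"
    and K: "K \<subseteq> parts_at V E s (k - 1)" "ancestor_part (k - 1) u \<in> K" "2 \<le> card K"
    and answers: "\<forall>x\<in>probe_set K. ans (u, x) = dist E u x"
begin

private abbreviation (input) "j \<equiv> heavy_depth K"
private abbreviation (input) "c \<equiv> heavy_part K"
private abbreviation (input) "Q \<equiv> ancestor_part (k - 1) u"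

private lemma search_state:
  "u \<in> V" "depth u = i" "heavy K j c" "Suc j < k" "c \<in> parts_at V E s j"
  "Q \<in> parts_at V E s (k - 1)" "descends_from (k - 1) Q u"
proof -
  show u_V: "u \<in> V" "depth u = i"
    using u by (auto simp: layer_def)
  show "heavy K j c" "Suc j < k" "c \<in> parts_at V E s j"
    using heavy_part[OF k_pos K(1,3)] by auto
  show "Q \<in> parts_at V E s (k - 1)" "descends_from (k - 1) Q u"
    using ancestor_part[OF u_V(1)] u_V(2) i_eq by auto
qed

lemma hit_children_eq: "hit_children u K ans = {c' \<in> children j c. descends_from (Suc j) c' u}"
proof -
  have "(\<exists>x\<in>c'. ans (u, x) = i - Suc j) \<longleftrightarrow> descends_from (Suc j) c' u"
    if c': "c' \<in> children j c" for c'
  proof -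
    have part: "c' \<in> parts_at V E s (Suc j)"
      using c' children_eq[OF search_state(4,5)] by blast
    have "ans (u, x) = dist E x u" if "x \<in> c'" for x
      using answers c' that dist_commute[OF search_state(1)] part_depth[OF part that]
      unfolding probe_set_def by auto
    then show ?thesis
      using descends_from_iff_dist[OF part search_state(1)] search_state(2,4) i_eq by auto
  qed
  then show ?thesis
    unfolding hit_children_def by blast
qed

lemma refine_hit:
  assumes "hit_children u K ans \<noteq> {}"
  shows "Q \<in> refine u K ans" "2 * card (refine u K ans) \<le> card K"
proof -
  define c' where "c' = (SOME c'. c' \<in> hit_children u K ans)"
  have "c' \<in> hit_children u K ans"
    unfolding c'_def using assms by (simp add: some_in_eq)
  then have c'_child: "c' \<in> children j c" and u_below_c': "descends_from (Suc j) c' u"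
    unfolding hit_children_eq by auto
  have c'_part: "c' \<in> parts_at V E s (Suc j)"
    using c'_child children_eq[OF search_state(4,5)] by blast
  have refine_eq: "refine u K ans = K \<inter> leaves_below (Suc j) c'"
    unfolding refine_def c'_def using assms by simp
  obtain q where q: "q \<in> Q"
    using part_nonempty[OF search_state(6)] by blast
  have "descends_from (Suc j) c' q"
    using descends_from_transfer[OF search_state(6) q search_state(7)] u_below_c' search_state(4)
    by simp
  then have "Q \<in> leaves_below (Suc j) c'"
    using leaves_below_eq[OF k_pos _ c'_part] search_state(4,6) q by auto
  then show "Q \<in> refine u K ans"
    unfolding refine_eq using K(2) by blast
  have "\<not> heavy K (Suc j) c'"
    using heavy_depth(2)[OF k_pos K(1)] K(2) by fastforce
  then show "2 * card (refine u K ans) \<le> card K"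
    unfolding refine_eq heavy_def
    using search_state(4) c'_part parts_in_layer_eq by (simp add: Int_commute)
qed

lemma refine_miss:
  assumes "hit_children u K ans = {}"
  shows "Q \<in> refine u K ans" "2 * card (refine u K ans) \<le> card K"
proof -
  have refine_eq: "refine u K ans = K - leaves_below j c"
    unfolding refine_def using assms by simp
  have "Q \<notin> leaves_below j c"
  proof
    assume "Q \<in> leaves_below j c"
    then obtain q where q: "q \<in> Q" "descends_from j c q"
      using leaves_below_eq[OF k_pos _ search_state(5)] search_state(4) by auto
    then have u_below_c: "descends_from j c u"
      using descends_from_transfer[OF search_state(6) q(1) search_state(7)] search_state(4) by simp
    define c' where "c' = ancestor_part (Suc j) u"
    have c'_part: "c' \<in> parts_at V E s (Suc j)" and u_below_c': "descends_from (Suc j) c' u"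
      unfolding c'_def using ancestor_part[OF search_state(1)] search_state(2,4) i_eq by auto
    obtain x where x: "x \<in> c'"
      using part_nonempty[OF c'_part] by blast
    then have "descends_from j c x"
      using descends_from_transfer[OF c'_part x u_below_c'] u_below_c by simp
    then have "c' \<in> children j c"
      using children_eq[OF search_state(4,5)] c'_part x by blast
    then show False
      using assms u_below_c' unfolding hit_children_eq by blast
  qed
  then show "Q \<in> refine u K ans"
    unfolding refine_eq using K(2) by blast
  have "finite K"
    using K(1) finite_parts_at finite_subset by blast
  then have "card (refine u K ans) = card K - card (leaves_below j c \<inter> K)"
    unfolding refine_eq by (simp add: card_Diff_subset_Int Int_commute)
  moreover have "card (leaves_below j c \<inter> K) \<le> card K"
    using card_mono[OF \<open>finite K\<close> Int_lower2] .
  ultimately show "2 * card (refine u K ans) \<le> card K"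
    using search_state(3) unfolding heavy_def by linarith
qed

lemma refine_halves:
  "Q \<in> refine u K ans \<and> 2 * card (refine u K ans) \<le> card K \<and> refine u K ans \<subseteq> parts_at V E s (k - 1)"
  using refine_hit refine_miss K(1) unfolding refine_def by (cases "hit_children u K ans = {}") auto

end

abbreviation dist_oracle :: "nat \<times> nat \<Rightarrow> nat" where
  "dist_oracle \<equiv> \<lambda>(u, v). dist E u v"

lemma locate_round:
  assumes "1 \<le> k" "u \<in> layer V E s i"
    and K: "K \<subseteq> parts_at V E s (k - 1)" "ancestor_part (k - 1) u \<in> K" "2 \<le> card K"
  defines "K' \<equiv> refine u K (run_result dist_oracle (ask_all (map (Pair u) (sorted_list_of_set (probe_set K)))))"
  shows "K' \<subseteq> parts_at V E s (k - 1)" "ancestor_part (k - 1) u \<in> K'"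
    "1 \<le> card K'" "2 * card K' \<le> card K" "log 2 (card K') \<le> log 2 (card K) - 1"
proof -
  let ?queries = "map (Pair u) (sorted_list_of_set (probe_set K))"
  have "\<forall>x\<in>probe_set K. run_result dist_oracle (ask_all ?queries) (u, x) = dist E u x"
    using run_result_ask_all[of _ ?queries dist_oracle] card_probe_set_le(1)[OF assms(1) K(1,3)]
    by auto
  then show K': "K' \<subseteq> parts_at V E s (k - 1)" "ancestor_part (k - 1) u \<in> K'"
    "2 * card K' \<le> card K"
    unfolding K'_def using refine_halves[OF assms(1,2) K] by auto
  show "1 \<le> card K'"
    using card_parts_subset_pos[OF K'(1,2)] by simp
  then show "log 2 (card K') \<le> log 2 (card K) - 1"
    using log2_le_pred[of "card K'" "card K"] K'(3) by simp
qed

lemma locate: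
  assumes "1 \<le> k" "u \<in> layer V E s i"
    and "K \<subseteq> parts_at V E s (k - 1)" "ancestor_part (k - 1) u \<in> K" "card K \<le> f"
  shows "run_result dist_oracle (locate f u K) = {ancestor_part (k - 1) u} \<and>
    real (run_queries dist_oracle (locate f u K)) \<le> 2 * real \<Delta> ^ (l + 1) * log 2 (card K)"
  using assms(3-5)
proof (induction f arbitrary: K)
  case 0
  then show ?case
    using card_parts_subset_pos[OF 0(1,2)] by simp
next
  case (Suc f)
  show ?case
  proof (cases "card K \<le> 1")
    case True
    then have "card K = 1"
      using card_parts_subset_pos[OF Suc.prems(1,2)] by simp
    then obtain x where "K = {x}"
      by (rule card_1_singletonE)
    then show ?thesis
      using Suc.prems(2) by simp
  next
    case False
    let ?K' = "refine u K (run_result dist_oracle (ask_all (map (Pair u) (sorted_list_of_set (probe_set K)))))"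
    note round = locate_round[OF assms(1,2) Suc.prems(1,2)] False
    have IH: "run_result dist_oracle (locate f u ?K') = {ancestor_part (k - 1) u} \<and>
        real (run_queries dist_oracle (locate f u ?K')) \<le> 2 * real \<Delta> ^ (l + 1) * log 2 (card ?K')"
      using round Suc.prems(3) by (intro Suc.IH) linarith+
    have "2 * real \<Delta> ^ (l + 1) * log 2 (card ?K') \<le> 2 * real \<Delta> ^ (l + 1) * (log 2 (card K) - 1)"
      using round by (intro mult_left_mono) auto
    moreover have probes: "finite (probe_set K)" "card (probe_set K) \<le> 2 * \<Delta> ^ (l + 1)"
      using card_probe_set_le[OF assms(1) Suc.prems(1)] False by auto
    then have "real (card (probe_set K)) \<le> real (2 * \<Delta> ^ (l + 1))"
      by (simp only: of_nat_le_iff)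
    ultimately show ?thesis
      using IH False probes(1) by (simp add: algebra_simps)
  qed
qed

lemma locate_part:
  assumes "u \<in> layer V E s i"
  shows "1 \<le> k \<Longrightarrow> run_result dist_oracle (locate_part u) = {ancestor_part (k - 1) u}"
    and "real (run_queries dist_oracle (locate_part u)) \<le> 2 * real \<Delta> ^ (l + 1) * log 2 (card V)"
proof -
  have u_V: "u \<in> V" "depth u = i"
    using assms by (auto simp: layer_def)
  have log_V: "0 \<le> log 2 (card V)"
    using card_V_pos by simp
  show "real (run_queries dist_oracle (locate_part u)) \<le> 2 * real \<Delta> ^ (l + 1) * log 2 (card V)"
  proof (cases "k = 0")
    case True
    then have "parts_in_layer (k - 1) = {}"
      unfolding parts_in_layer_def by simp
    then show ?thesis
      using log_V by (simp add: locate_part_def)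
  next
    case False
    then have layer_parts: "parts_in_layer (k - 1) = parts_at V E s (k - 1)"
      using parts_in_layer_eq by simp
    have anc: "ancestor_part (k - 1) u \<in> parts_at V E s (k - 1)"
      using ancestor_part(1)[OF u_V(1)] u_V(2) i_eq by simp
    then have "card (parts_at V E s (k - 1)) \<ge> 1"
      using card_parts_subset_pos[OF subset_refl] by (simp add: Suc_le_eq)
    then have "log 2 (card (parts_at V E s (k - 1))) \<le> log 2 (card V)"
      using card_parts_at_le[of "k - 1"] by (subst log_le_cancel_iff) auto
    then have "2 * real \<Delta> ^ (l + 1) * log 2 (card (parts_at V E s (k - 1)))
        \<le> 2 * real \<Delta> ^ (l + 1) * log 2 (card V)"
      by (intro mult_left_mono) auto
    then show ?thesis
      using locate[OF _ assms subset_refl anc le_refl] False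
      unfolding locate_part_def layer_parts by simp
  qed
  assume "1 \<le> k"
  then have "parts_in_layer (k - 1) = parts_at V E s (k - 1)"
    using parts_in_layer_eq by simp
  then show "run_result dist_oracle (locate_part u) = {ancestor_part (k - 1) u}"
    using locate[OF \<open>1 \<le> k\<close> assms subset_refl _ le_refl] ancestor_part(1)[OF u_V(1)] u_V(2) i_eq
    unfolding locate_part_def by simp
qed

lemma candidates_subset: "candidates m u \<subseteq> layer V E s (i - 1) \<union> layer V E s i"
  unfolding candidates_def by auto

lemma finite_candidates: "finite (candidates m u)"
  by (rule finite_subset[OF candidates_subset]) (simp add: finite_layer)

lemma set_candidate_queries: "set (candidate_queries m) = Sigma (layer V E s i) (candidates m)"
  unfolding candidate_queries_def using finite_layer finite_candidates by auto

lemma length_candidate_queries: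
  "length (candidate_queries m) = (\<Sum>u\<in>layer V E s i. card (candidates m u))"
  unfolding candidate_queries_def length_concat
  using finite_layer finite_candidates by (simp add: sum_list_distinct_conv_sum_set)

context
  fixes m :: "nat \<Rightarrow> nat set set"
  assumes located: "\<And>x. 1 \<le> k \<Longrightarrow> x \<in> layer V E s i \<Longrightarrow> m x = {ancestor_part (k - 1) x}"
begin

lemma candidates_eq:
  assumes "1 \<le> k" "u \<in> layer V E s i"
  shows "candidates m u =
    {v \<in> layer V E s (i - 1) \<union> layer V E s i. descends_from (k - 1) (ancestor_part (k - 1) u) v}"
proof -
  let ?Q = "ancestor_part (k - 1) u"
  have Q: "?Q \<in> parts_at V E s (k - 1)"
    using ancestor_part(1) assms(2) i_eq by (simp add: layer_def)
  have "walk_from ?Q v (i - k) \<longleftrightarrow> descends_from (k - 1) ?Q v" if "v \<in> layer V E s (i - 1)" for v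
    using walk_from_iff_descends_from[OF Q, of v] that assms(1) i_eq by (simp add: layer_def)
  moreover have "m v = m u \<longleftrightarrow> descends_from (k - 1) ?Q v" if v: "v \<in> layer V E s i" for v
  proof -
    have "v \<in> V" "k - 1 \<le> depth v"
      using v i_eq by (auto simp: layer_def)
    then show ?thesis
      using located[OF assms(1)] v assms(2) ancestor_part[of v "k - 1"] ancestor_part_eq[OF Q]
      by auto
  qed
  ultimately show ?thesis
    unfolding candidates_def using assms(1) located[OF assms] by auto
qed

lemma card_candidates_le:
  assumes "u \<in> layer V E s i"
  shows "card (candidates m u) \<le> 4 * \<Delta> ^ (2 * l + 3)"
proof (cases "k = 0")
  case True
  then have "card (candidates m u) \<le> card (layer V E s (i - 1)) + card (layer V E s i)"
    unfolding candidates_def by (simp add: card_Un_le)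
  also have "\<dots> \<le> 2 * \<Delta> ^ (i - 1) + 2 * \<Delta> ^ i"
    using card_layer_le by (intro add_mono)
  also have "\<dots> \<le> 2 * \<Delta> ^ (2 * l + 3) + 2 * \<Delta> ^ (2 * l + 3)"
    using power_\<Delta>_mono[of "i - 1" "2 * l + 3"] power_\<Delta>_mono[of i "2 * l + 3"] True i_eq
    by (intro add_mono) simp_all
  finally show ?thesis
    by simp
next
  case False
  let ?Q = "ancestor_part (k - 1) u"
  let ?D = "\<lambda>j. {v \<in> layer V E s j. descends_from (k - 1) ?Q v}"
  have Q: "?Q \<in> parts_at V E s (k - 1)"
    using ancestor_part(1) assms i_eq by (simp add: layer_def)
  have "candidates m u = ?D (i - 1) \<union> ?D i"
    using candidates_eq[of u] assms False by auto
  then have "card (candidates m u) \<le> card (?D (i - 1)) + card (?D i)"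
    by (simp add: card_Un_le)
  also have "\<dots> \<le> 2 * \<Delta> ^ (l + (i - 1 - (k - 1))) + 2 * \<Delta> ^ (l + (i - (k - 1)))"
    by (intro add_mono card_descendants_in_layer_le[OF Q]) (use i_eq in simp_all)
  also have "\<dots> \<le> 2 * \<Delta> ^ (2 * l + 3) + 2 * \<Delta> ^ (2 * l + 3)"
    using power_\<Delta>_mono[of "l + (i - 1 - (k - 1))" "2 * l + 3"]
      power_\<Delta>_mono[of "l + (i - (k - 1))" "2 * l + 3"] False i_eq
    by (intro add_mono) simp_all
  finally show ?thesis
    by simp
qed

lemma neighbour_in_candidates:
  assumes "u \<in> layer V E s i" "(u, v) \<in> adj E" "v \<in> layer V E s (i - 1) \<union> layer V E s i"
  shows "v \<in> candidates m u"
proof (cases "k = 0")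
  case True
  then show ?thesis
    using assms(3) unfolding candidates_def by simp
next
  case False
  let ?Q = "ancestor_part (k - 1) u"
  have depths: "depth u = i" "k - 1 \<le> depth v"
    using assms(1,3) i_eq by (auto simp: layer_def)
  have "descends_from (k - 1) ?Q u"
    using ancestor_part(2)[of u "k - 1"] assms(1) depths(1) i_eq by (simp add: layer_def)
  then obtain q where q: "q \<in> ?Q" "u \<in> component (k - 1) q"
    unfolding descends_from_def by blast
  have "v \<in> component (k - 1) u"
    using component_adj[OF assms(2)] depths i_eq by simp
  then have "descends_from (k - 1) ?Q v"
    using q component_trans unfolding descends_from_def by blast
  then show ?thesis
    using candidates_eq[of u] assms(1,3) False by auto
qed

lemma next_prefix_eq:
  assumes answers: "\<forall>q\<in>set (candidate_queries m). ans q = dist_oracle q"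
  shows "next_prefix m ans = graph_prefix V E s (i + 1)"
proof -
  have "(u, v) \<in> set (candidate_queries m) \<and> ans (u, v) = 1 \<longleftrightarrow>
      u \<in> layer V E s i \<and> v \<in> layer V E s (i - 1) \<union> layer V E s i \<and> (u, v) \<in> adj E" for u v
  proof -
    have "(u, v) \<in> set (candidate_queries m) \<longleftrightarrow>
        u \<in> layer V E s i \<and> v \<in> layer V E s (i - 1) \<union> layer V E s i \<and> v \<in> candidates m u"
      using set_candidate_queries candidates_subset by blast
    moreover have "dist E u v = 1 \<longleftrightarrow> (u, v) \<in> adj E"
      if "u \<in> layer V E s i" "v \<in> layer V E s (i - 1) \<union> layer V E s i"
      using dist_eq_1_iff that by (auto simp: layer_def)
    ultimately show ?thesis
      using answers neighbour_in_candidates by auto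
  qed
  then have "{{u, v} | u v. (u, v) \<in> set (candidate_queries m) \<and> ans (u, v) = 1} =
      {{u, v} | u v. u \<in> layer V E s i \<and> v \<in> layer V E s (i - 1) \<union> layer V E s i \<and> (u, v) \<in> adj E}"
    by presburger
  moreover have "(\<Union>j\<le>i. layer V E s j) = layers_lt V E s (Suc i)"
    by (auto simp: layer_def layers_lt_def)
  ultimately show ?thesis
    unfolding next_prefix_def graph_prefix_def Let_def using prefix_edges_Suc by simp
qed

end

context
begin

private definition located_parts :: "nat \<Rightarrow> nat set set" where
  "located_parts = run_result dist_oracle (run_all locate_part (sorted_list_of_set (layer V E s i)))"

private definition answers :: "nat \<times> nat \<Rightarrow> nat" where
  "answers = run_result dist_oracle (ask_all (candidate_queries located_parts))"

private lemma located_parts: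
  assumes "1 \<le> k" "x \<in> layer V E s i"
  shows "located_parts x = {ancestor_part (k - 1) x}"
proof -
  have "x \<in> set (sorted_list_of_set (layer V E s i))"
    using assms(2) finite_layer by simp
  then show ?thesis
    unfolding located_parts_def by (simp add: run_result_run_all locate_part(1)[OF assms(2,1)])
qed

private lemma extension_eq: "run_result dist_oracle extension = next_prefix located_parts answers"
  and run_queries_extension: "run_queries dist_oracle extension =
    (\<Sum>u\<in>layer V E s i. run_queries dist_oracle (locate_part u)) + length (candidate_queries located_parts)"
  unfolding extension_def located_parts_def answers_def
  using finite_layer by (simp_all add: run_queries_run_all sum_list_distinct_conv_sum_set)

lemma extension_correct: "run_result dist_oracle extension = graph_prefix V E s (i + 1)"
proof -
  have "\<forall>q\<in>set (candidate_queries located_parts). answers q = dist_oracle q"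
    unfolding answers_def by (simp add: run_result_ask_all)
  then show ?thesis
    unfolding extension_eq using next_prefix_eq[of located_parts answers] located_parts by blast
qed

lemma extension_queries:
  "real (run_queries dist_oracle extension)
    \<le> real (card (layer V E s i)) * (2 * real \<Delta> ^ (l + 1) * log 2 (card V) + 4 * real \<Delta> ^ (2 * l + 3))"
proof -
  have "real (\<Sum>u\<in>layer V E s i. run_queries dist_oracle (locate_part u))
      \<le> real (card (layer V E s i)) * (2 * real \<Delta> ^ (l + 1) * log 2 (card V))"
    unfolding of_nat_sum using locate_part(2) by (rule sum_bounded_above)
  moreover have "real (length (candidate_queries located_parts))
      \<le> real (card (layer V E s i)) * (4 * real \<Delta> ^ (2 * l + 3))"
  proof -
    have "length (candidate_queries located_parts) \<le> card (layer V E s i) * (4 * \<Delta> ^ (2 * l + 3))"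
      unfolding length_candidate_queries
      using sum_bounded_above[of "layer V E s i" "\<lambda>u. card (candidates located_parts u)"]
        card_candidates_le[OF located_parts]
      by simp
    then have "real (length (candidate_queries located_parts))
        \<le> real (card (layer V E s i) * (4 * \<Delta> ^ (2 * l + 3)))"
      by (simp only: of_nat_le_iff)
    then show ?thesis
      by simp
  qed
  ultimately show ?thesis
    unfolding run_queries_extension of_nat_add distrib_left by (rule add_mono)
qed

end

lemma extension_queries_le:
  "real (run_queries dist_oracle extension)
    \<le> 4 * real (card (layer V E s i)) * (real \<Delta> ^ (l + 2) * ln (card V) + real \<Delta> ^ (4 * l + 8))"
proof -
  have \<Delta>: "1 \<le> real \<Delta>"
    using max_degree_ge_2 by simp
  have "card V \<ge> 1"
    using card_V_pos by simp
  then have "2 * real \<Delta> ^ (l + 1) * log 2 (card V) \<le> 2 * real \<Delta> ^ (l + 2) * (2 * ln (card V))"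
    using log2_le_twice_ln[of "card V"] power_increasing[OF _ \<Delta>, of "l + 1" "l + 2"]
    by (intro mult_mono) auto
  moreover have "4 * real \<Delta> ^ (2 * l + 3) \<le> 4 * real \<Delta> ^ (4 * l + 8)"
    using power_increasing[OF _ \<Delta>, of "2 * l + 3" "4 * l + 8"] by simp
  ultimately have "2 * real \<Delta> ^ (l + 1) * log 2 (card V) + 4 * real \<Delta> ^ (2 * l + 3)
      \<le> 4 * (real \<Delta> ^ (l + 2) * ln (card V) + real \<Delta> ^ (4 * l + 8))"
    by (simp add: algebra_simps)
  then have "real (run_queries dist_oracle extension)
      \<le> real (card (layer V E s i)) * (4 * (real \<Delta> ^ (l + 2) * ln (card V) + real \<Delta> ^ (4 * l + 8)))"
    using extension_queries by (meson mult_left_mono of_nat_0_le_iff order_trans)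
  then show ?thesis
    by (simp only: mult_ac)
qed

end

theorem mainTheorem6:
  "\<exists>C :: real. \<exists>A :: procedure.
     \<forall>(V :: nat set) (E :: nat set set) (s :: nat) (l :: nat) (k :: nat).
       simple_graph V E \<and> connected_graph V E \<and> card V \<ge> 2 \<and> max_degree V E \<ge> 2 \<and>
       s \<in> V \<and> l \<ge> tree_length V E s \<longrightarrow>
       (let i = k + l + 2;
            D = real (max_degree V E);
            n = real (card V);
            oracle = (\<lambda>(u, v). dist E u v);
            T = A (l, k, layer V E s, graph_prefix V E s i, tree_prefix V E s k)
        in run_result oracle T = graph_prefix V E s (i + 1) \<and>
           real (run_queries oracle T)
             \<le> C * real (card (layer V E s i)) * (D ^ (l + 2) * ln n + D ^ (4 * l + 8)))"
proof (intro exI[of _ "4 :: real"] exI[of _ extend_prefix] allI impI, goal_cases)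
  case (1 V E s l k)
  then interpret layer_extension V E s l k "k + l + 2"
    by unfold_locales auto
  show ?case
    unfolding Let_def extend_prefix_eq using extension_correct extension_queries_le by simp
qed

end
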